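(* Let $K,G:[0,\infty)\to\mathbb{R}$ be continuous, let $f$ solve $f''+Kf=0$ with $f>0$ on $(0,\infty)$ and $\int_1^\infty f(t)^{-2}dt<\infty$, and let $m$ solve $m''+Gm=0$ with $m(0)=f(0)$, $m'(0)=f'(0)$. Suppose the support of $G-K$ is contained in a bounded interval $[a,b]\subset[1,\infty)$. If $\alpha(m)<1$, then $m(t)>0$ for all $t\in(0,\infty)$ and $$\int_1^\infty|f(t)^{-2}-m(t)^{-2}|\,dt\le\frac{(2+\alpha(m))\,\alpha(m)}{(1-\alpha(m))^2}\int_a^\infty f(t)^{-2}dt.$$
   Context: Notation: $\sigma(t):=m(t)/f(t)-1$ for $t>0$; $\alpha(m):=\sup_{t>0}|\sigma(t)|$. *)

theory Defs
  imports "HOL-Analysis.Analysis"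
begin

definition sigma :: "(real \<Rightarrow> real) \<Rightarrow> (real \<Rightarrow> real) \<Rightarrow> real \<Rightarrow> real" where
  "sigma f m t = m t / f t - 1"

definition alpha :: "(real \<Rightarrow> real) \<Rightarrow> (real \<Rightarrow> real) \<Rightarrow> ereal" where
  "alpha f m = (SUP t\<in>{0<..}. ereal \<bar>sigma f m t\<bar>)"

end

theory Submission
  imports Defs
begin

text \<open>
  Since G = K on [0,a), the functions m and f solve the same linear
  second-order equation there with the same initial data, so m = f on [0,a) by an
  energy estimate (Gronwall in the form: (u^2 + v^2) e^(-Bt) is non-increasing).
  Hence 1/f^2 - 1/m^2 vanishes on [1,a).  The hypothesis alpha(m) < 1 makes alpha(m)
  a finite real A in [0,1) with |sigma| <= A, which gives m > 0.  Writing m = (1+s) f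
  with |s| <= A, the identity 1/f^2 - 1/m^2 = s(2+s)/(1+s)^2 * 1/f^2 bounds the
  integrand by (2+A)A/(1-A)^2 * 1/f^2 on [a,oo).  Domination by an integrable function
  then yields integrability and the integral bound.
\<close>

text \<open>The cross term of the energy derivative is dominated by the energy itself.\<close>
lemma cross_term_le_energy:
  fixes x y c B :: real
  assumes "\<bar>c\<bar> \<le> B"
  shows "2 * x * y * c \<le> B * (x\<^sup>2 + y\<^sup>2)"
proof -
  have sq: "2 * \<bar>x\<bar> * \<bar>y\<bar> \<le> x\<^sup>2 + y\<^sup>2"
    using zero_le_power2[of "\<bar>x\<bar> - \<bar>y\<bar>"] by (simp add: power2_diff)
  have "2 * x * y * c \<le> (2 * \<bar>x\<bar> * \<bar>y\<bar>) * \<bar>c\<bar>"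
    by (metis abs_ge_self abs_mult abs_numeral)
  also have "\<dots> \<le> (x\<^sup>2 + y\<^sup>2) * B"
    using sq assms by (intro mult_mono) auto
  finally show ?thesis by (simp add: mult.commute)
qed

text \<open>With |1 - q| <= B
  the weighted energy (u^2 + u'^2) e^(-Bt) is non-increasing and starts at 0.\<close>
lemma linear_ode_zero_initial_data:
  fixes u v q :: "real \<Rightarrow> real" and T :: real
  assumes T: "0 \<le> T"
    and cont_q: "continuous_on {0..T} q"
    and u_deriv: "\<And>t. t \<in> {0..T} \<Longrightarrow> (u has_real_derivative v t) (at t within {0..T})"
    and v_deriv: "\<And>t. t \<in> {0..T} \<Longrightarrow> (v has_real_derivative (- q t * u t)) (at t within {0..T})"
    and init: "u 0 = 0" "v 0 = 0"
  shows "u T = 0"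
proof -
  have "bounded ((\<lambda>t. 1 - q t) ` {0..T})"
    by (intro compact_imp_bounded compact_continuous_image continuous_intros cont_q) auto
  then obtain B where "\<forall>t\<in>{0..T}. \<bar>1 - q t\<bar> \<le> B"
    unfolding bounded_iff by auto
  then have B: "\<And>t. t \<in> {0..T} \<Longrightarrow> \<bar>1 - q t\<bar> \<le> B" by blast
  define E where "E t = ((u t)\<^sup>2 + (v t)\<^sup>2) * exp (- B * t)" for t
  have E_deriv: "(E has_real_derivative
      ((2 * u t * v t * (1 - q t) - B * ((u t)\<^sup>2 + (v t)\<^sup>2)) * exp (- B * t)))
      (at t within {0..T})" if "t \<in> {0..T}" for t
    unfolding E_def
    by (rule derivative_eq_intros u_deriv[OF that] v_deriv[OF that] refl | simp)+
       (simp add: algebra_simps power2_eq_square)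
  have "E T \<le> E 0"
  proof (rule DERIV_nonpos_imp_decreasing_open[OF T])
    fix t assume t: "0 < t" "t < T"
    have "at t within {0..T} = at t" using t by (intro at_within_interior) auto
    moreover have "2 * u t * v t * (1 - q t) - B * ((u t)\<^sup>2 + (v t)\<^sup>2) \<le> 0"
      using cross_term_le_energy[OF B] t by auto
    ultimately show "\<exists>y. (E has_real_derivative y) (at t) \<and> y \<le> 0"
      using E_deriv[of t] t by (intro exI conjI) (auto intro: mult_nonpos_nonneg)
  next
    show "continuous_on {0..T} E"
      using E_deriv DERIV_continuous continuous_on_eq_continuous_within by blast
  qed
  also have "E 0 = 0" using init by (simp add: E_def)
  finally have "(u T)\<^sup>2 + (v T)\<^sup>2 \<le> 0" by (simp add: E_def mult_le_0_iff)
  then have "(u T)\<^sup>2 = 0"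
    using zero_le_power2[of "u T"] zero_le_power2[of "v T"] by linarith
  then show ?thesis by simp
qed

text \<open>Two solutions of f'' = -K f and m'' = -G m with equal initial data coincide on
  every interval [0,T] on which the coefficients G and K agree: their difference solves
  the linear equation with coefficient K and vanishing initial data.\<close>
lemma solutions_agree_while_coefficients_agree:
  fixes K G f f' m m' :: "real \<Rightarrow> real" and T :: real
  assumes contK: "continuous_on {0..} K"
    and f_deriv: "\<And>t. t \<ge> 0 \<Longrightarrow> (f has_real_derivative f' t) (at t within {0..})"
    and f'_deriv: "\<And>t. t \<ge> 0 \<Longrightarrow> (f' has_real_derivative (- K t * f t)) (at t within {0..})"
    and m_deriv: "\<And>t. t \<ge> 0 \<Longrightarrow> (m has_real_derivative m' t) (at t within {0..})"
    and m'_deriv: "\<And>t. t \<ge> 0 \<Longrightarrow> (m' has_real_derivative (- G t * m t)) (at t within {0..})"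
    and init: "m 0 = f 0" "m' 0 = f' 0"
    and T: "0 \<le> T"
    and agree: "\<And>t. t \<in> {0..T} \<Longrightarrow> G t = K t"
  shows "m T = f T"
proof -
  define u where "u t = m t - f t" for t
  define v where "v t = m' t - f' t" for t
  have "u T = 0"
  proof (rule linear_ode_zero_initial_data[OF T])
    show "continuous_on {0..T} K" using contK by (rule continuous_on_subset) auto
  next
    fix t assume t: "t \<in> {0..T}"
    show "(u has_real_derivative v t) (at t within {0..T})"
      unfolding u_def v_def by (rule DERIV_subset[where s="{0..}"])
        (use t in \<open>auto intro!: derivative_eq_intros m_deriv f_deriv\<close>)
    show "(v has_real_derivative - K t * u t) (at t within {0..T})"
      unfolding u_def v_def by (rule DERIV_subset[where s="{0..}"])
        (use t agree[OF t] in \<open>auto intro!: derivative_eq_intros m'_deriv f'_deriv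
          simp: algebra_simps\<close>)
  qed (use init in \<open>auto simp: u_def v_def\<close>)
  then show ?thesis by (simp add: u_def)
qed

lemma alpha_lt_one_real:
  assumes "alpha f m < 1"
  shows "0 \<le> real_of_ereal (alpha f m)" and "real_of_ereal (alpha f m) < 1"
    and "\<And>t. t > 0 \<Longrightarrow> \<bar>m t / f t - 1\<bar> \<le> real_of_ereal (alpha f m)"
proof -
  have sigma_le: "ereal \<bar>sigma f m t\<bar> \<le> alpha f m" if "t > 0" for t
    unfolding alpha_def using that by (intro SUP_upper) auto
  have "0 \<le> alpha f m" using order_trans[OF _ sigma_le[of 1]] by simp
  then have real: "alpha f m = ereal (real_of_ereal (alpha f m))"
    using assms by (cases "alpha f m") auto
  then show "0 \<le> real_of_ereal (alpha f m)" and "real_of_ereal (alpha f m) < 1"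
    using \<open>0 \<le> alpha f m\<close> assms by (metis ereal_less_eq(3) zero_ereal_def,
        metis ereal_less(3) one_ereal_def)
  show "\<bar>m t / f t - 1\<bar> \<le> real_of_ereal (alpha f m)" if "t > 0" for t
    using sigma_le[OF that] real by (metis ereal_less_eq(3) sigma_def)
qed

text \<open>Pointwise comparison of inverse squares: if M = (1+s) F with |s| <= A < 1, then
  |1/F^2 - 1/M^2| <= (2+A)A/(1-A)^2 * 1/F^2, via 1/F^2 - 1/M^2 = s(2+s)/(1+s)^2 * 1/F^2.\<close>
lemma inverse_square_difference_bound:
  fixes F M A :: real
  assumes F: "F > 0" and s: "\<bar>M / F - 1\<bar> \<le> A" and A: "A < 1"
  shows "\<bar>1 / F\<^sup>2 - 1 / M\<^sup>2\<bar> \<le> (2 + A) * A / (1 - A)\<^sup>2 * (1 / F\<^sup>2)"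
proof -
  define s where "s = M / F - 1"
  have M: "M = (1 + s) * F" using F by (simp add: s_def field_simps)
  have sA: "\<bar>s\<bar> \<le> A" and s1: "1 + s > 0" using s A by (auto simp: s_def)
  have "(1 + s)\<^sup>2 - 1 = s * (2 + s)" by (simp add: power2_eq_square algebra_simps)
  moreover have "1 / F\<^sup>2 - 1 / M\<^sup>2 = ((1 + s)\<^sup>2 - 1) / (1 + s)\<^sup>2 * (1 / F\<^sup>2)"
    using F s1 unfolding M power_mult_distrib by (simp add: field_simps)
  ultimately have "1 / F\<^sup>2 - 1 / M\<^sup>2 = s * (2 + s) / (1 + s)\<^sup>2 * (1 / F\<^sup>2)" by simp
  then have "\<bar>1 / F\<^sup>2 - 1 / M\<^sup>2\<bar> = \<bar>s\<bar> * \<bar>2 + s\<bar> / (1 + s)\<^sup>2 * (1 / F\<^sup>2)"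
    by (simp add: abs_mult)
  also have "\<dots> \<le> A * (2 + A) / (1 - A)\<^sup>2 * (1 / F\<^sup>2)"
  proof (intro mult_right_mono frac_le mult_mono)
    show "(1 - A)\<^sup>2 \<le> (1 + s)\<^sup>2" using sA A by (intro power_mono) auto
  qed (use sA A in auto)
  finally show ?thesis by (simp add: mult.commute)
qed

lemma integral_le_tail_bound:
  fixes g w :: "real \<Rightarrow> real" and a c C :: real
  assumes ca: "c \<le> a" and C: "0 \<le> C"
    and cont_g: "continuous_on {c..} g"
    and w_int: "w integrable_on {c..}" and w_nonneg: "\<And>t. t \<ge> c \<Longrightarrow> 0 \<le> w t"
    and g_zero: "\<And>t. c \<le> t \<Longrightarrow> t < a \<Longrightarrow> g t = 0"
    and g_bound: "\<And>t. a \<le> t \<Longrightarrow> \<bar>g t\<bar> \<le> C * w t"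
  shows "g integrable_on {c..}" and "integral {c..} g \<le> C * integral {a..} w"
proof -
  have "w absolutely_integrable_on {c..}"
    using w_int w_nonneg by (intro nonnegative_absolutely_integrable) auto
  then have "w absolutely_integrable_on {a..}"
    using set_integrable_subset[of _ "{c..}" w "{a..}"] ca by auto
  then have w_int_a: "w integrable_on {a..}"
    using set_lebesgue_integral_eq_integral(1) by blast
  define h where "h t = (if t \<in> {a..} then C * w t else 0)" for t
  have h_int: "h integrable_on {c..}" and h_integral: "integral {c..} h = C * integral {a..} w"
    unfolding h_def integrable_restrict_Int integral_restrict_Int
    using ca integrable_on_cmult_right[OF w_int_a, of C] by (simp_all add: Int_absorb2 mult.commute)
  have g_le_h: "\<bar>g t\<bar> \<le> h t" if "t \<in> {c..}" for t
    using that g_zero[of t] g_bound[of t] by (auto simp: h_def)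
  have "g \<in> borel_measurable (lebesgue_on {c..})"
    by (rule continuous_imp_measurable_on_sets_lebesgue[OF cont_g]) auto
  then show g_int: "g integrable_on {c..}"
    using h_int g_le_h by (rule measurable_bounded_by_integrable_imp_integrable_real) auto
  have "integral {c..} g \<le> integral {c..} h"
    using g_int h_int g_le_h by (intro integral_le) (auto intro: order_trans[OF abs_ge_self])
  then show "integral {c..} g \<le> C * integral {a..} w" by (simp add: h_integral)
qed

theorem lemma2p5:
  fixes K G f f' m m' :: "real \<Rightarrow> real" and a b :: real
  assumes contK: "continuous_on {0..} K"
    and contG: "continuous_on {0..} G"
    and f_deriv: "\<And>t. t \<ge> 0 \<Longrightarrow> (f has_real_derivative f' t) (at t within {0..})"
    and f'_deriv: "\<And>t. t \<ge> 0 \<Longrightarrow> (f' has_real_derivative (- K t * f t)) (at t within {0..})"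
    and f_pos: "\<And>t. t > 0 \<Longrightarrow> f t > 0"
    and f_int: "(\<lambda>t. 1 / (f t)\<^sup>2) integrable_on {1..}"
    and m_deriv: "\<And>t. t \<ge> 0 \<Longrightarrow> (m has_real_derivative m' t) (at t within {0..})"
    and m'_deriv: "\<And>t. t \<ge> 0 \<Longrightarrow> (m' has_real_derivative (- G t * m t)) (at t within {0..})"
    and init0: "m 0 = f 0"
    and init1: "m' 0 = f' 0"
    and ab: "1 \<le> a" "a \<le> b"
    and supp: "\<And>t. t \<ge> 0 \<Longrightarrow> t \<notin> {a..b} \<Longrightarrow> G t = K t"
    and alpha_lt: "alpha f m < 1"
  shows "(\<forall>t>0. m t > 0)
    \<and> (\<lambda>t. \<bar>1 / (f t)\<^sup>2 - 1 / (m t)\<^sup>2\<bar>) integrable_on {1..}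
    \<and> integral {1..} (\<lambda>t. \<bar>1 / (f t)\<^sup>2 - 1 / (m t)\<^sup>2\<bar>)
        \<le> (2 + real_of_ereal (alpha f m)) * real_of_ereal (alpha f m)
             / (1 - real_of_ereal (alpha f m))\<^sup>2
           * integral {a..} (\<lambda>t. 1 / (f t)\<^sup>2)"
proof -
  define A where "A = real_of_ereal (alpha f m)"
  note alpha = alpha_lt_one_real[OF alpha_lt, folded A_def]
  have m_pos: "m t > 0" if "t > 0" for t
  proof -
    have "m t / f t > 0" using alpha(2) alpha(3)[OF that] by linarith
    then show ?thesis using f_pos[OF that] by (simp add: zero_less_divide_iff)
  qed
  have m_eq_f: "m t = f t" if "0 \<le> t" "t < a" for t
    using solutions_agree_while_coefficients_agree[OF contK f_deriv f'_deriv m_deriv m'_deriv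
        init0 init1 that(1)] supp that by auto
  have "continuous_on {0..} f" "continuous_on {0..} m"
    unfolding continuous_on_eq_continuous_within using f_deriv m_deriv DERIV_continuous by blast+
  then have "continuous_on {1..} f" "continuous_on {1..} m"
    by (auto elim!: continuous_on_subset)
  moreover have "(f t)\<^sup>2 \<noteq> 0 \<and> (m t)\<^sup>2 \<noteq> 0" if "t \<in> {1..}" for t
    using that f_pos[of t] m_pos[of t] by simp
  ultimately have integrand_cont: "continuous_on {1..} (\<lambda>t. \<bar>1 / (f t)\<^sup>2 - 1 / (m t)\<^sup>2\<bar>)"
    by (intro continuous_intros) auto
  have integrand_bound: "\<bar>\<bar>1 / (f t)\<^sup>2 - 1 / (m t)\<^sup>2\<bar>\<bar> \<le> (2 + A) * A / (1 - A)\<^sup>2 * (1 / (f t)\<^sup>2)"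
    if "a \<le> t" for t
  proof -
    have t: "t > 0" using that ab by linarith
    show ?thesis using inverse_square_difference_bound[OF f_pos[OF t] alpha(3)[OF t] alpha(2)] by simp
  qed
  have "0 \<le> (2 + A) * A / (1 - A)\<^sup>2" using alpha(1,2) by simp
  from integral_le_tail_bound[OF ab(1) this integrand_cont f_int _ _ integrand_bound]
  show ?thesis using m_pos m_eq_f by (auto simp: A_def)
qed

end
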